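(* Let $a\in[0,1)$, $q,t\in(0,1)$, $\nu>0$. For any $i,j\in\{0,1\}$ and $n_1,n_2\in\mathbb{N}$, $$\sum_{m_1,m_2\ge0}c_{m_1,m_2}\,Z^{\mathrm{left}}_a(i,j;m_1,m_2;n_1,n_2)=\sum_{m_1,m_2\ge0}c_{m_1,m_2}\,Z^{\mathrm{right}}_a(i,j;m_1,m_2;n_1,n_2),$$ where $c_{m_1,m_2}=h_{m_2}(-t;q)(-t\nu)^{m_1}h_{m_1}(-\frac{1}{\nu^2t};q)$ (only finitely many terms are nonzero).
   Context: Rogers–Szegő polynomials $h_m(x;q)=\sum_{k=0}^m\binom mk_qx^k$. Deformed boson vertices: a vertex has horizontal edges (left, right) carrying $0$ or $1$ arrow, and vertical edges (bottom, top) carrying any number $\ge0$ of arrows, with arrow conservation (left + bottom = right + top). With $m$ arrows entering from below, the "black" weights with rapidity $a$ are: (left 0, right 0, top $m$): $1$; (left 0, right 1, top $m-1$): $a$; (left 1, right 0, top $m+1$): $1-q^{m+1}$; (left 1, right 1, top $m$): $a$. The "red" weights with rapidity $a$ are: (0,0): $a$; (0,1): $1$; (1,0): $a(1-q^{m+1})$; (1,1): $1$. A boundary vertex lies on a horizontal edge, has one input and one output horizontal state, and weights with $D=(1-a\nu t)(1+a/\nu)$: (in 0, out 0): $\frac{a\nu^{-1}(1-t\nu^2)+(1-t)}{D}$; (in 0, out 1): $\frac{t(1-a^2)}{D}$; (in 1, out 0): $\frac{1-a^2}{D}$; (in 1, out 1): $\frac{a\nu^{-1}(1-t\nu^2)+a^2(1-t)}{D}$.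 $Z^{\mathrm{left}}_a(i,j;m_1,m_2;n_1,n_2)$ is the sum over internal horizontal edge states of the product of weights of the row consisting, from left to right, of: a horizontal input in state $i$, a boundary vertex, a black vertex with $m_2$ arrows entering from below and $n_2$ exiting at top, a black vertex with $m_1$ below and $n_1$ on top, and horizontal output in state $j$. $Z^{\mathrm{right}}_a$ is the same but with the row consisting of: input $i$, a red vertex $(m_2$ below, $n_2$ top$)$, a red vertex $(m_1,n_1)$, then a boundary vertex, output $j$. *)

theory Defs
  imports "HOL-Analysis.Analysis"
begin

definition qfact :: "real \<Rightarrow> nat \<Rightarrow> real" where
  "qfact q n = (\<Prod>i<n. 1 - q ^ (i + 1))"

definition qbinom :: "real \<Rightarrow> nat \<Rightarrow> nat \<Rightarrow> real" where
  "qbinom q m k = (if k \<le> m then qfact q m / (qfact q k * qfact q (m - k)) else 0)"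

definition rogers_szego :: "nat \<Rightarrow> real \<Rightarrow> real \<Rightarrow> real" where
  "rogers_szego m x q = (\<Sum>k\<le>m. qbinom q m k * x ^ k)"

text \<open>Black vertex weight: left state l, m arrows from below, right state r, n arrows on top.
  Horizontal states are 0 or 1; weight 0 if arrow conservation fails.\<close>
definition black_w :: "real \<Rightarrow> real \<Rightarrow> nat \<Rightarrow> nat \<Rightarrow> nat \<Rightarrow> nat \<Rightarrow> real" where
  "black_w a q l m r n =
     (if l \<le> 1 \<and> r \<le> 1 \<and> l + m = r + n then
        (if l = 0 \<and> r = 0 then 1
         else if l = 0 \<and> r = 1 then a
         else if l = 1 \<and> r = 0 then 1 - q ^ (m + 1)
         else a)
      else 0)"

definition red_w :: "real \<Rightarrow> real \<Rightarrow> nat \<Rightarrow> nat \<Rightarrow> nat \<Rightarrow> nat \<Rightarrow> real" where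
  "red_w a q l m r n =
     (if l \<le> 1 \<and> r \<le> 1 \<and> l + m = r + n then
        (if l = 0 \<and> r = 0 then a
         else if l = 0 \<and> r = 1 then 1
         else if l = 1 \<and> r = 0 then a * (1 - q ^ (m + 1))
         else 1)
      else 0)"

definition bdry_w :: "real \<Rightarrow> real \<Rightarrow> real \<Rightarrow> nat \<Rightarrow> nat \<Rightarrow> real" where
  "bdry_w a t \<nu> i j =
     (let D = (1 - a * \<nu> * t) * (1 + a / \<nu>) in
      if i = 0 \<and> j = 0 then (a / \<nu> * (1 - t * \<nu>\<^sup>2) + (1 - t)) / D
      else if i = 0 \<and> j = 1 then t * (1 - a\<^sup>2) / D
      else if i = 1 \<and> j = 0 then (1 - a\<^sup>2) / D
      else if i = 1 \<and> j = 1 then (a / \<nu> * (1 - t * \<nu>\<^sup>2) + a\<^sup>2 * (1 - t)) / D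
      else 0)"

definition Z_left :: "real \<Rightarrow> real \<Rightarrow> real \<Rightarrow> real \<Rightarrow> nat \<Rightarrow> nat \<Rightarrow> nat \<Rightarrow> nat \<Rightarrow> nat \<Rightarrow> nat \<Rightarrow> real" where
  "Z_left a q t \<nu> i j m1 m2 n1 n2 =
     (\<Sum>k1\<in>{0,1}. \<Sum>k2\<in>{0,1}.
        bdry_w a t \<nu> i k1 * black_w a q k1 m2 k2 n2 * black_w a q k2 m1 j n1)"

definition Z_right :: "real \<Rightarrow> real \<Rightarrow> real \<Rightarrow> real \<Rightarrow> nat \<Rightarrow> nat \<Rightarrow> nat \<Rightarrow> nat \<Rightarrow> nat \<Rightarrow> nat \<Rightarrow> real" where
  "Z_right a q t \<nu> i j m1 m2 n1 n2 =
     (\<Sum>k1\<in>{0,1}. \<Sum>k2\<in>{0,1}.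
        red_w a q i m2 k1 n2 * red_w a q k1 m1 k2 n1 * bdry_w a t \<nu> k2 j)"

definition coef_c :: "real \<Rightarrow> real \<Rightarrow> real \<Rightarrow> nat \<Rightarrow> nat \<Rightarrow> real" where
  "coef_c q t \<nu> m1 m2 =
     rogers_szego m2 (- t) q * (- t * \<nu>) ^ m1 * rogers_szego m1 (- 1 / (\<nu>\<^sup>2 * t)) q"

end

theory Submission
  imports Defs
begin

text \<open>
  Arrow conservation at the black and red vertices determines the bottom occupations
  \<open>(m1, m2)\<close> from the top ones and the two internal horizontal edges, so each side is a
  sum of four terms. The coefficient factors as \<open>c(m1, m2) = h(m2) H(m1)\<close> with
  \<open>h(m) = h\<^sub>m(-t; q)\<close> and \<open>H(m) = (-t\<nu>)\<^sup>m h\<^sub>m(-1/(\<nu>\<^sup>2t); q)\<close>, and the Rogers--Szeg\<ouml>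
  recurrence \<open>h\<^sub>m\<^sub>+\<^sub>1(x) = (1 + x) h\<^sub>m(x) - x (1 - q\<^sup>m) h\<^sub>m\<^sub>-\<^sub>1(x)\<close> gives both sequences a
  recurrence \<open>f(n + 1) = \<alpha> f(n) + t (1 - q\<^sup>n) f(n - 1)\<close>, with \<open>\<alpha> = 1 - t\<close> resp.
  \<open>\<alpha> = 1/\<nu> - t\<nu>\<close>. Eliminating \<open>h(n2 + 1)\<close> and \<open>H(n1 + 1)\<close> leaves, for each boundary
  pair \<open>(i, j)\<close>, a polynomial identity in \<open>h(n2), h(n2 - 1), H(n1), H(n1 - 1)\<close>.
\<close>

lemma qfact_Suc: "qfact q (Suc n) = qfact q n * (1 - q ^ Suc n)"
  by (simp add: qfact_def)

lemma power_Suc_neq_one: "\<bar>q\<bar> < 1 \<Longrightarrow> q ^ Suc n \<noteq> (1::real)"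
  by (metis abs_one abs_ge_zero less_imp_le not_less power_abs power_Suc_le_self)

lemma qfact_0 [simp]: "qfact q 0 = 1"
  by (simp add: qfact_def)

lemma qfact_nonzero: "\<bar>q\<bar> < 1 \<Longrightarrow> qfact q n \<noteq> 0"
  by (induction n) (simp_all add: qfact_Suc power_Suc_neq_one del: power_Suc)

lemma qbinom_0_right: "\<bar>q\<bar> < 1 \<Longrightarrow> qbinom q m 0 = 1"
  by (simp add: qbinom_def qfact_nonzero)

lemma qbinom_diag: "\<bar>q\<bar> < 1 \<Longrightarrow> qbinom q m m = 1"
  by (simp add: qbinom_def qfact_nonzero)

lemma qbinom_above: "m < k \<Longrightarrow> qbinom q m k = 0"
  by (simp add: qbinom_def)

lemma qbinom_Suc_Suc:
  assumes q: "\<bar>q\<bar> < 1"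
  shows "qbinom q (Suc (Suc m)) (Suc k)
       = qbinom q (Suc m) (Suc k) + qbinom q (Suc m) k - (1 - q ^ Suc m) * qbinom q m k"
proof (cases "k \<le> m")
  case True
  then obtain r where m: "m = k + r" using le_iff_add by blast
  define A B M uk ur um where defs: "A = qfact q k" "B = qfact q r" "M = qfact q (k + r)"
    "uk = 1 - q ^ Suc k" "ur = 1 - q ^ Suc r" "um = 1 - q ^ Suc (k + r)"
  \<comment> \<open>the last one is \<open>1 - q\<^sup>k\<^sup>+\<^sup>r\<^sup>+\<^sup>2 = 1 - q\<^sup>k\<^sup>+\<^sup>1 q\<^sup>r\<^sup>+\<^sup>1\<close> in disguise\<close>
  have facts: "qfact q (Suc k) = A * uk" "qfact q (Suc r) = B * ur" "qfact q (Suc (k + r)) = M * um"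
    "qfact q (Suc (Suc (k + r))) = M * um * (uk + ur - uk * ur)"
    by (simp_all add: defs qfact_Suc algebra_simps power_add[symmetric] del: power_Suc)
  have nz: "A \<noteq> 0" "B \<noteq> 0" "uk \<noteq> 0" "ur \<noteq> 0"
    using qfact_nonzero[OF q] power_Suc_neq_one[OF q]
    by (simp_all add: defs del: power_Suc)
  have diffs: "Suc (Suc m) - Suc k = Suc r" "Suc m - Suc k = r" "Suc m - k = Suc r" "m - k = r"
    using m by auto
  have "M * um * (uk + ur - uk * ur) / (A * uk * (B * ur))
      = M * um / (A * uk * B) + M * um / (A * (B * ur)) - um * (M / (A * B))"
    using nz by (simp add: field_simps)
  then show ?thesis
    using True unfolding qbinom_def
    by (simp add: diffs m facts flip: defs del: power_Suc)
next
  case False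
  then consider "k = Suc m" | "Suc m < k" by linarith
  then show ?thesis
    by cases (simp_all add: qbinom_diag[OF q] qbinom_above)
qed

lemma rogers_szego_0 [simp]: "rogers_szego 0 x q = 1"
  by (simp add: rogers_szego_def qbinom_def)

text \<open>For \<open>m = 0\<close> the truncated \<open>m - 1\<close> is harmless because its coefficient \<open>1 - q\<^sup>0\<close> vanishes.\<close>
lemma rogers_szego_Suc:
  assumes q: "\<bar>q\<bar> < 1"
  shows "rogers_szego (Suc m) x q
       = (1 + x) * rogers_szego m x q - x * (1 - q ^ m) * rogers_szego (m - 1) x q"
proof (cases m)
  case 0
  then show ?thesis by (simp add: rogers_szego_def qbinom_0_right[OF q] qbinom_diag[OF q])
next
  case (Suc n)
  have shift: "rogers_szego (Suc k) x q = 1 + (\<Sum>l\<le>N. qbinom q (Suc k) (Suc l) * x ^ Suc l)"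
    if "k \<le> N" for k N
  proof -
    have "(\<Sum>l\<le>k. qbinom q (Suc k) (Suc l) * x ^ Suc l) = (\<Sum>l\<le>N. qbinom q (Suc k) (Suc l) * x ^ Suc l)"
      using that by (intro sum.mono_neutral_left) (auto simp: qbinom_above)
    then show ?thesis
      unfolding rogers_szego_def sum.atMost_Suc_shift by (simp add: qbinom_0_right[OF q])
  qed
  have times_x: "x * c * rogers_szego k x q = (\<Sum>l\<le>N. c * qbinom q k l * x ^ Suc l)"
    if "k \<le> N" for k N c
  proof -
    have "(\<Sum>l\<le>k. c * qbinom q k l * x ^ Suc l) = (\<Sum>l\<le>N. c * qbinom q k l * x ^ Suc l)"
      using that by (intro sum.mono_neutral_left) (auto simp: qbinom_above)
    then show ?thesis
      unfolding rogers_szego_def by (simp add: sum_distrib_left algebra_simps)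
  qed
  show ?thesis
    using times_x[of "Suc n" "Suc n" 1] times_x[of n "Suc n" "1 - q ^ Suc n"]
      shift[of "Suc n" "Suc n"] shift[of n "Suc n"]
    by (simp add: Suc algebra_simps qbinom_Suc_Suc[OF q] sum.distrib sum_subtractf
        del: power_Suc sum.atMost_Suc)
qed

lemma scaled_rogers_szego_Suc:
  assumes "\<bar>q\<bar> < 1"
  shows "c ^ Suc m * rogers_szego (Suc m) x q
       = c * (1 + x) * (c ^ m * rogers_szego m x q)
         - c\<^sup>2 * x * (1 - q ^ m) * (c ^ (m - 1) * rogers_szego (m - 1) x q)"
  by (cases m) (simp_all add: rogers_szego_Suc[OF assms] power2_eq_square algebra_simps)

text \<open>For \<open>n = 0\<close> the configuration \<open>(1, n - 1, 0, n)\<close> violates conservation and has weight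
  \<open>0 = 1 - q\<^sup>0\<close>, so truncated subtraction does no harm.\<close>
lemma black_w_conserving:
  "black_w a q 0 n 0 n = 1" "black_w a q 0 (Suc n) 1 n = a"
  "black_w a q 1 (n - 1) 0 n = 1 - q ^ n" "black_w a q 1 n 1 n = a"
  by (cases n; simp add: black_w_def)+

lemma red_w_conserving:
  "red_w a q 0 n 0 n = a" "red_w a q 0 (Suc n) 1 n = 1"
  "red_w a q 1 (n - 1) 0 n = a * (1 - q ^ n)" "red_w a q 1 n 1 n = 1"
  by (cases n; simp add: red_w_def)+

lemma black_w_conservation: "black_w a q l m r n \<noteq> 0 \<Longrightarrow> l + m = r + n"
  by (simp add: black_w_def split: if_splits)

lemma red_w_conservation: "red_w a q l m r n \<noteq> 0 \<Longrightarrow> l + m = r + n"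
  by (simp add: red_w_def split: if_splits)

lemma infsum_sum_point_supported:
  fixes g :: "'i \<Rightarrow> 'a \<Rightarrow> 'b::{comm_monoid_add, t2_space}"
  assumes "finite I" and support: "\<And>i x. g i x \<noteq> 0 \<Longrightarrow> x = P i"
  shows "(\<Sum>\<^sub>\<infinity>x\<in>UNIV. \<Sum>i\<in>I. g i x) = (\<Sum>i\<in>I. g i (P i))"
proof -
  have point: "g i x = (if x = P i then g i (P i) else 0)" for i x
    using support by metis
  have "(\<Sum>\<^sub>\<infinity>x\<in>UNIV. \<Sum>i\<in>I. g i x) = (\<Sum>\<^sub>\<infinity>x\<in>P ` I. \<Sum>i\<in>I. g i x)"
    by (rule infsum_cong_neutral) (auto intro!: sum.neutral dest: support)
  also have "\<dots> = (\<Sum>i\<in>I. \<Sum>x\<in>P ` I. g i x)"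
    using \<open>finite I\<close> by (simp add: sum.swap[of _ I])
  also have "\<dots> = (\<Sum>i\<in>I. g i (P i))"
    using \<open>finite I\<close> by (subst point) (simp add: if_distrib cong: sum.cong)
  finally show ?thesis .
qed

lemma infsum_coef_c_Z_left:
  "(\<Sum>\<^sub>\<infinity>(m1, m2)\<in>UNIV. coef_c q t \<nu> m1 m2 * Z_left a q t \<nu> i j m1 m2 n1 n2)
 = (\<Sum>k1\<in>{0,1}. \<Sum>k2\<in>{0,1}. coef_c q t \<nu> (j + n1 - k2) (k2 + n2 - k1) *
      (bdry_w a t \<nu> i k1 * black_w a q k1 (k2 + n2 - k1) k2 n2 * black_w a q k2 (j + n1 - k2) j n1))"
proof -
  define g where "g k m = coef_c q t \<nu> (fst m) (snd m) * (bdry_w a t \<nu> i (fst k)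
      * black_w a q (fst k) (snd m) (snd k) n2 * black_w a q (snd k) (fst m) j n1)"
    for k m :: "nat \<times> nat"
  have split: "(\<lambda>(m1, m2). coef_c q t \<nu> m1 m2 * Z_left a q t \<nu> i j m1 m2 n1 n2)
      = (\<lambda>m. \<Sum>k\<in>{0,1} \<times> {0,1}. g k m)"
    by (auto simp: fun_eq_iff Z_left_def g_def distrib_left simp flip: sum.cartesian_product)
  have support: "g k m \<noteq> 0 \<Longrightarrow> m = (j + n1 - snd k, snd k + n2 - fst k)" for k m
    using black_w_conservation[of a q "fst k" "snd m" "snd k" n2]
      black_w_conservation[of a q "snd k" "fst m" j n1]
    by (cases m) (auto simp: g_def)
  have "(\<Sum>\<^sub>\<infinity>m\<in>UNIV. \<Sum>k\<in>{0,1} \<times> {0,1}. g k m)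
      = (\<Sum>k\<in>{0,1} \<times> {0,1}. g k (j + n1 - snd k, snd k + n2 - fst k))"
    by (rule infsum_sum_point_supported) (simp_all add: support)
  then show ?thesis
    unfolding split by (simp add: g_def sum.cartesian_product)
qed

lemma infsum_coef_c_Z_right:
  "(\<Sum>\<^sub>\<infinity>(m1, m2)\<in>UNIV. coef_c q t \<nu> m1 m2 * Z_right a q t \<nu> i j m1 m2 n1 n2)
 = (\<Sum>k1\<in>{0,1}. \<Sum>k2\<in>{0,1}. coef_c q t \<nu> (k2 + n1 - k1) (k1 + n2 - i) *
      (red_w a q i (k1 + n2 - i) k1 n2 * red_w a q k1 (k2 + n1 - k1) k2 n1 * bdry_w a t \<nu> k2 j))"
proof -
  define g where "g k m = coef_c q t \<nu> (fst m) (snd m) * (red_w a q i (snd m) (fst k) n2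
      * red_w a q (fst k) (fst m) (snd k) n1 * bdry_w a t \<nu> (snd k) j)"
    for k m :: "nat \<times> nat"
  have split: "(\<lambda>(m1, m2). coef_c q t \<nu> m1 m2 * Z_right a q t \<nu> i j m1 m2 n1 n2)
      = (\<lambda>m. \<Sum>k\<in>{0,1} \<times> {0,1}. g k m)"
    by (auto simp: fun_eq_iff Z_right_def g_def distrib_left simp flip: sum.cartesian_product)
  have support: "g k m \<noteq> 0 \<Longrightarrow> m = (snd k + n1 - fst k, fst k + n2 - i)" for k m
    using red_w_conservation[of a q i "snd m" "fst k" n2]
      red_w_conservation[of a q "fst k" "fst m" "snd k" n1]
    by (cases m) (auto simp: g_def)
  have "(\<Sum>\<^sub>\<infinity>m\<in>UNIV. \<Sum>k\<in>{0,1} \<times> {0,1}. g k m)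
      = (\<Sum>k\<in>{0,1} \<times> {0,1}. g k (snd k + n1 - fst k, fst k + n2 - i))"
    by (rule infsum_sum_point_supported) (simp_all add: support)
  then show ?thesis
    unfolding split by (simp add: g_def sum.cartesian_product)
qed

theorem lemma2p7:
  fixes a q t \<nu> :: real and i j n1 n2 :: nat
  assumes "0 \<le> a" "a < 1" "0 < q" "q < 1" "0 < t" "t < 1" "0 < \<nu>"
    and "i \<in> {0, 1}" "j \<in> {0, 1}"
  shows "(\<Sum>\<^sub>\<infinity>(m1, m2)\<in>(UNIV :: (nat \<times> nat) set).
            coef_c q t \<nu> m1 m2 * Z_left a q t \<nu> i j m1 m2 n1 n2)
       = (\<Sum>\<^sub>\<infinity>(m1, m2)\<in>(UNIV :: (nat \<times> nat) set).
            coef_c q t \<nu> m1 m2 * Z_right a q t \<nu> i j m1 m2 n1 n2)"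
proof -
  have q: "\<bar>q\<bar> < 1" and nz: "t \<noteq> 0" "\<nu> \<noteq> 0"
    using assms by auto
  define h H where "h n = rogers_szego n (- t) q"
    and "H n = (- t * \<nu>) ^ n * rogers_szego n (- 1 / (\<nu>\<^sup>2 * t)) q" for n
  have coef: "coef_c q t \<nu> m1 m2 = h m2 * H m1" for m1 m2
    by (simp add: coef_c_def h_def H_def)
  have h_Suc: "h (Suc n) = (1 - t) * h n + t * (1 - q ^ n) * h (n - 1)" for n
    by (simp add: h_def rogers_szego_Suc[OF q])
  have H_Suc: "H (Suc n) = (1 / \<nu> - t * \<nu>) * H n + t * (1 - q ^ n) * H (n - 1)" for n
  proof -
    have "(- t * \<nu>) * (1 + - 1 / (\<nu>\<^sup>2 * t)) = 1 / \<nu> - t * \<nu>"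
      and "(- t * \<nu>)\<^sup>2 * (- 1 / (\<nu>\<^sup>2 * t)) = - t"
      using nz by (simp_all add: field_simps power2_eq_square)
    then show ?thesis
      using scaled_rogers_szego_Suc[OF q, of "- t * \<nu>" n "- 1 / (\<nu>\<^sup>2 * t)"]
      by (simp only: H_def)
  qed
  define E where "E = inverse ((1 - a * \<nu> * t) * (1 + a / \<nu>))"
  have bdry: "bdry_w a t \<nu> 0 0 = (a / \<nu> * (1 - t * \<nu>\<^sup>2) + (1 - t)) * E"
    "bdry_w a t \<nu> 0 1 = t * (1 - a\<^sup>2) * E"
    "bdry_w a t \<nu> 1 0 = (1 - a\<^sup>2) * E"
    "bdry_w a t \<nu> 1 1 = (a / \<nu> * (1 - t * \<nu>\<^sup>2) + a\<^sup>2 * (1 - t)) * E"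
    by (simp_all add: bdry_w_def E_def divide_inverse)
  \<comment> \<open>simp normalises \<open>1 :: nat\<close> to \<open>Suc 0\<close>, hence the unfolded weight lemmas\<close>
  show ?thesis
    unfolding infsum_coef_c_Z_left infsum_coef_c_Z_right
    using assms(8,9)
    by (auto simp: coef h_Suc H_Suc bdry[unfolded One_nat_def]
        black_w_conserving[unfolded One_nat_def] red_w_conserving[unfolded One_nat_def])
      (simp_all add: field_simps nz power2_eq_square)
qed

end
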